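(* Let $X$ be a pure simplicial complex of dimension $d$ with $n\ge1$ facets and $v$ vertices. Then $X$ is stacked if and only if $v=n+d$ and for every pair of facets $f,f'$ of $X$ (including $f=f'$) there is a unique path from $f$ to $f'$.
   Context: A simplicial complex $X$ on a finite vertex set $V$ is a family of subsets (faces) of $V$ closed under taking subsets, every element of $V$ lying in some face; facets are inclusion-maximal faces. $X$ is pure of dimension $d$ if every facet has $d+1$ elements; a codimension one face is a face with $d$ elements. $X$ is stacked if it is pure of some dimension $d$ and its facets can be ordered $F_0,F_1,\dots,F_k$ (a stacking order) such that for each $p\ge 1$, $F_p$ contains exactly one vertex $v_p$ not in $F_0\cup\dots\cup F_{p-1}$ (called the free vertex of $F_p$), and $F_p\setminus\{v_p\}\subseteq F_j$ for some $j<p$. A walk is a sequence of facets $f_1,\dots,f_p$ ($p\ge 1$) such that each $f_i\cap f_{i+1}$ has exactly $d$ elements; a path is a walk in which the faces $f_i\cap f_{i+1}$, $1\le i<p$, are pairwise distinct; it is a path from $f_1$ to $f_p$. (The one-term sequence $f$ is a path from $f$ to $f$.) *)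

theory Defs
  imports Main
begin

definition simplicial_complex :: "'a set \<Rightarrow> 'a set set \<Rightarrow> bool" where
  "simplicial_complex V X \<longleftrightarrow> finite V \<and> (\<forall>F\<in>X. F \<subseteq> V)
     \<and> (\<forall>F\<in>X. \<forall>G. G \<subseteq> F \<longrightarrow> G \<in> X) \<and> (\<forall>x\<in>V. \<exists>F\<in>X. x \<in> F)"

definition facets :: "'a set set \<Rightarrow> 'a set set" where
  "facets X = {F \<in> X. \<forall>G\<in>X. F \<subseteq> G \<longrightarrow> G = F}"

definition pure :: "'a set set \<Rightarrow> nat \<Rightarrow> bool" where
  "pure X d \<longleftrightarrow> (\<forall>F\<in>facets X. card F = d + 1)"

definition stacking_order :: "'a set set \<Rightarrow> 'a set list \<Rightarrow> bool" where
  "stacking_order X Fs \<longleftrightarrow> Fs \<noteq> [] \<and> distinct Fs \<and> set Fs = facets X \<and>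
     (\<forall>p. 0 < p \<and> p < length Fs \<longrightarrow>
        (\<exists>v. Fs ! p - \<Union>(set (take p Fs)) = {v} \<and> (\<exists>j<p. Fs ! p - {v} \<subseteq> Fs ! j)))"

definition stacked :: "'a set set \<Rightarrow> bool" where
  "stacked X \<longleftrightarrow> (\<exists>d. pure X d) \<and> (\<exists>Fs. stacking_order X Fs)"

definition walk :: "'a set set \<Rightarrow> nat \<Rightarrow> 'a set list \<Rightarrow> bool" where
  "walk X d fs \<longleftrightarrow> fs \<noteq> [] \<and> set fs \<subseteq> facets X \<and>
     (\<forall>i. Suc i < length fs \<longrightarrow> card (fs ! i \<inter> fs ! Suc i) = d)"

definition path :: "'a set set \<Rightarrow> nat \<Rightarrow> 'a set list \<Rightarrow> bool" where
  "path X d fs \<longleftrightarrow> walk X d fs \<and>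
     distinct (map (\<lambda>i. fs ! i \<inter> fs ! Suc i) [0..<length fs - 1])"

definition path_from :: "'a set set \<Rightarrow> nat \<Rightarrow> 'a set list \<Rightarrow> 'a set \<Rightarrow> 'a set \<Rightarrow> bool" where
  "path_from X d fs f f' \<longleftrightarrow> path X d fs \<and> hd fs = f \<and> last fs = f'"

end

theory Submission
  imports Defs
begin

text \<open>A facet F attached with a free vertex v meets every earlier facet adjacent to it in the same
  ridge F - {v}. A path crosses each ridge at most once, so F can only be an end of a path, and
  uniqueness of paths passes from the earlier facets to the larger complex; since every step also
  adds exactly one vertex, a stacked complex with n facets has n + d vertices.

  Conversely, if any two facets are joined by a path, the facets can be listed so that each is
  adjacent to an earlier one. Each step then adds at most one vertex, and the count n + d forces
  exactly one: that vertex is free and the rest of the new facet lies in the earlier neighbour, which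
  is a stacking order.\<close>

section \<open>Walks and paths\<close>

fun ridges :: "'a set list \<Rightarrow> 'a set list" where
  "ridges (a # b # fs) = (a \<inter> b) # ridges (b # fs)"
| "ridges _ = []"

lemma ridges_conv_map: "ridges fs = map (\<lambda>i. fs ! i \<inter> fs ! Suc i) [0..<length fs - 1]"
proof (induction fs rule: ridges.induct)
  case (1 a b fs)
  have "[0..<length (a # b # fs) - 1] = 0 # map Suc [0..<length (b # fs) - 1]"
    by (simp add: upt_conv_Cons map_Suc_upt del: upt_Suc)
  then show ?case using 1 by (simp add: comp_def)
qed auto

lemma ridges_Cons: "xs \<noteq> [] \<Longrightarrow> ridges (x # xs) = (x \<inter> hd xs) # ridges xs"
  by (cases xs) auto

lemma ridges_append:
  "ridges (xs @ ys) = ridges xs @ (if xs = [] \<or> ys = [] then [] else [last xs \<inter> hd ys]) @ ridges ys"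
proof (induction xs rule: induct_list012)
  case (2 x)
  then show ?case by (cases ys) auto
qed auto

lemma ridges_rev: "ridges (rev fs) = rev (ridges fs)"
proof (induction fs)
  case (Cons a fs)
  then show ?case by (cases "fs = []") (auto simp: ridges_append ridges_Cons last_rev Int_commute)
qed simp

lemma ridges_split:
  "ridges fs = xs @ y # ys \<Longrightarrow>
     \<exists>A B. fs = A @ B \<and> A \<noteq> [] \<and> B \<noteq> [] \<and> y = last A \<inter> hd B \<and> ridges B = ys"
proof (induction fs arbitrary: xs rule: ridges.induct)
  case (1 a b fs)
  show ?case
  proof (cases xs)
    case Nil
    then show ?thesis using 1 by (intro exI[of _ "[a]"] exI[of _ "b # fs"]) auto
  next
    case (Cons x xs')
    then have "ridges (b # fs) = xs' @ y # ys" using 1 by simp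
    from "1.IH"[OF this] obtain A B where
      "b # fs = A @ B" "A \<noteq> []" "B \<noteq> []" "y = last A \<inter> hd B" "ridges B = ys"
      by blast
    then show ?thesis by (intro exI[of _ "a # A"] exI[of _ B]) auto
  qed
qed auto

definition walk_in :: "'a set set \<Rightarrow> nat \<Rightarrow> 'a set list \<Rightarrow> bool" where
  "walk_in S d fs \<longleftrightarrow> fs \<noteq> [] \<and> set fs \<subseteq> S \<and> successively (\<lambda>a b. card (a \<inter> b) = d) fs"

definition path_in :: "'a set set \<Rightarrow> nat \<Rightarrow> 'a set list \<Rightarrow> bool" where
  "path_in S d fs \<longleftrightarrow> walk_in S d fs \<and> distinct (ridges fs)"

lemma walk_iff_walk_in: "walk X d fs \<longleftrightarrow> walk_in (facets X) d fs"
  unfolding walk_def walk_in_def by (simp add: successively_conv_nth)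

lemma path_iff_path_in: "path X d fs \<longleftrightarrow> path_in (facets X) d fs"
  unfolding path_def walk_iff_walk_in path_in_def by (simp add: ridges_conv_map)

lemma walk_in_mono: "walk_in S d fs \<Longrightarrow> S \<subseteq> T \<Longrightarrow> walk_in T d fs"
  unfolding walk_in_def by auto

lemma walk_in_rev [simp]: "walk_in S d (rev fs) \<longleftrightarrow> walk_in S d fs"
  unfolding walk_in_def by (simp add: Int_commute)

lemma path_in_rev [simp]: "path_in S d (rev fs) \<longleftrightarrow> path_in S d fs"
  unfolding path_in_def by (simp add: ridges_rev)

lemma path_in_Cons:
  assumes "xs \<noteq> []"
  shows "path_in S d (x # xs) \<longleftrightarrow>
    x \<in> S \<and> card (x \<inter> hd xs) = d \<and> x \<inter> hd xs \<notin> set (ridges xs) \<and> path_in S d xs"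
  using assms unfolding path_in_def walk_in_def by (auto simp: ridges_Cons successively_Cons)

lemma meet_eq_common_subset:
  assumes "card a = Suc d" "card b = Suc d" "a \<noteq> b" "y \<subseteq> a" "y \<subseteq> b" "card y = d"
  shows "a \<inter> b = y"
proof -
  have fin: "finite a" "finite b" using assms(1,2) by (metis card.infinite nat.distinct(1))+
  have "\<not> a \<subseteq> b" using card_subset_eq[OF fin(2)] assms(1-3) by auto
  then have "card (a \<inter> b) < Suc d" using fin assms(1) by (metis Int_lower1 inf.absorb_iff1 psubsetI psubset_card_mono)
  moreover have "card y \<le> card (a \<inter> b)" using assms(4,5) fin by (intro card_mono) auto
  ultimately show ?thesis using card_subset_eq[of "a \<inter> b" y] fin assms(4-6) by auto
qed

lemma walk_in_append:
  assumes "xs \<noteq> []" "ys \<noteq> []"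
  shows "walk_in S d (xs @ ys) \<longleftrightarrow> walk_in S d xs \<and> walk_in S d ys \<and> card (last xs \<inter> hd ys) = d"
  using assms unfolding walk_in_def by (auto simp: successively_append_iff)

lemma walk_in_ends: "walk_in S d ws \<Longrightarrow> hd ws \<in> S \<and> last ws \<in> S"
  unfolding walk_in_def by auto

lemma walk_in_glue:
  assumes "walk_in S d xs" "walk_in S d ys" "last xs = hd ys"
  shows "walk_in S d (xs @ tl ys) \<and> hd (xs @ tl ys) = hd xs \<and> last (xs @ tl ys) = last ys"
proof (cases "tl ys = []")
  case True
  then have "last ys = hd ys" using assms(2) unfolding walk_in_def by (cases ys) auto
  then show ?thesis using assms True by simp
next
  case False
  have "xs \<noteq> []" "walk_in S d ([hd ys] @ tl ys)" using assms(1,2) unfolding walk_in_def by auto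
  then have "walk_in S d (tl ys)" "card (hd ys \<inter> hd (tl ys)) = d"
    using False walk_in_append[of "[hd ys]" "tl ys" S d] by simp_all
  then show ?thesis using assms \<open>xs \<noteq> []\<close> False by (simp add: walk_in_append last_tl)
qed

lemma walk_to_path:
  assumes card_S: "\<forall>F\<in>S. card F = Suc d" and "walk_in S d fs"
  shows "\<exists>gs. path_in S d gs \<and> hd gs = hd fs \<and> last gs = last fs"
  using assms(2)
proof (induction fs rule: length_induct)
  case (1 fs)
  show ?case
  proof (cases "distinct (ridges fs)")
    case True
    then show ?thesis using "1.prems" unfolding path_in_def by blast
  next
    case False
    then obtain xs y ys zs where "ridges fs = xs @ y # ys @ y # zs"
      using not_distinct_decomp by fastforce
    then obtain A B where AB: "fs = A @ B" "A \<noteq> []" "B \<noteq> []" "y = last A \<inter> hd B"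
        "ridges B = ys @ y # zs"
      using ridges_split by blast
    then obtain M C where MC: "B = M @ C" "M \<noteq> []" "C \<noteq> []" "y = last M \<inter> hd C"
      using ridges_split by blast
    have walks: "walk_in S d A" "walk_in S d C" "card y = d"
      using "1.prems" AB MC by (auto simp: walk_in_append)
    have "\<exists>gs. walk_in S d gs \<and> length gs < length fs \<and> hd gs = hd fs \<and> last gs = last fs"
    proof (cases "last A = hd C")
      case True
      moreover have "length (A @ tl C) < length fs" using AB(1) MC(1,3) by (cases C) auto
      ultimately show ?thesis using walk_in_glue[OF walks(1,2) True] AB MC
        by (intro exI[of _ "A @ tl C"]) auto
    next
      case False
      have in_S: "last A \<in> S" "hd C \<in> S" using walks(1,2) walk_in_ends by blast+
      have "last A \<inter> hd C = y" using AB(4) MC(4) walks(3) card_S in_S False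
        by (intro meet_eq_common_subset) auto
      then have "walk_in S d (A @ C)" using walks AB MC by (simp add: walk_in_append)
      then show ?thesis using AB MC by (intro exI[of _ "A @ C"]) auto
    qed
    then obtain gs where "walk_in S d gs" "length gs < length fs" "hd gs = hd fs" "last gs = last fs"
      by blast
    with "1.IH" show ?thesis by fastforce
  qed
qed

definition walk_between :: "'a set set \<Rightarrow> nat \<Rightarrow> 'a set \<Rightarrow> 'a set \<Rightarrow> bool" where
  "walk_between S d f f' \<longleftrightarrow> (\<exists>ws. walk_in S d ws \<and> hd ws = f \<and> last ws = f')"

lemma walk_between_refl: "f \<in> S \<Longrightarrow> walk_between S d f f"
  unfolding walk_between_def walk_in_def by (intro exI[of _ "[f]"]) auto

lemma walk_between_adjacent: "f \<in> S \<Longrightarrow> f' \<in> S \<Longrightarrow> card (f \<inter> f') = d \<Longrightarrow> walk_between S d f f'"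
  unfolding walk_between_def walk_in_def by (intro exI[of _ "[f, f']"]) auto

lemma walk_between_sym: "walk_between S d f f' \<Longrightarrow> walk_between S d f' f"
proof -
  assume "walk_between S d f f'"
  then obtain ws where ws: "walk_in S d ws" "hd ws = f" "last ws = f'"
    unfolding walk_between_def by blast
  then have "ws \<noteq> []" unfolding walk_in_def by simp
  then show ?thesis unfolding walk_between_def using ws
    by (intro exI[of _ "rev ws"]) (simp add: hd_rev last_rev)
qed

lemma walk_between_trans:
  assumes "walk_between S d f g" "walk_between S d g h"
  shows "walk_between S d f h"
proof -
  obtain ws ws' where ws: "walk_in S d ws" "hd ws = f" "last ws = g"
    and ws': "walk_in S d ws'" "hd ws' = g" "last ws' = h"
    using assms unfolding walk_between_def by blast
  then show ?thesis using walk_in_glue[OF ws(1) ws'(1)] unfolding walk_between_def by auto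
qed

lemma walk_between_mono: "walk_between S d f f' \<Longrightarrow> S \<subseteq> T \<Longrightarrow> walk_between T d f f'"
  unfolding walk_between_def using walk_in_mono by blast

definition unique_paths :: "'a set set \<Rightarrow> nat \<Rightarrow> bool" where
  "unique_paths S d \<longleftrightarrow>
     (\<forall>fs gs. path_in S d fs \<longrightarrow> path_in S d gs \<longrightarrow> hd fs = hd gs \<longrightarrow> last fs = last gs \<longrightarrow> fs = gs)"

lemma ex1_path_iff:
  assumes "\<forall>F\<in>S. card F = Suc d"
  shows "(\<forall>f\<in>S. \<forall>f'\<in>S. \<exists>!fs. path_in S d fs \<and> hd fs = f \<and> last fs = f') \<longleftrightarrow>
         (\<forall>f\<in>S. \<forall>f'\<in>S. walk_between S d f f') \<and> unique_paths S d"
proof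
  assume ex1: "\<forall>f\<in>S. \<forall>f'\<in>S. \<exists>!fs. path_in S d fs \<and> hd fs = f \<and> last fs = f'"
  have "unique_paths S d" unfolding unique_paths_def
  proof (intro allI impI)
    fix fs gs assume fs: "path_in S d fs" and gs: "path_in S d gs"
      and ends: "hd fs = hd gs" "last fs = last gs"
    have "hd fs \<in> S" "last fs \<in> S" using fs unfolding path_in_def walk_in_def by auto
    with ex1 have "\<exists>!p. path_in S d p \<and> hd p = hd fs \<and> last p = last fs" by simp
    then show "fs = gs" using fs gs ends by (metis (no_types, lifting))
  qed
  moreover have "walk_between S d f f'" if ends: "f \<in> S" "f' \<in> S" for f f'
  proof -
    have "\<exists>fs. path_in S d fs \<and> hd fs = f \<and> last fs = f'"
      using ex1 ends by (simp add: ex1_implies_ex)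
    then obtain fs where "path_in S d fs" "hd fs = f" "last fs = f'" by blast
    then show ?thesis unfolding walk_between_def path_in_def by blast
  qed
  ultimately show "(\<forall>f\<in>S. \<forall>f'\<in>S. walk_between S d f f') \<and> unique_paths S d" by blast
next
  assume connected: "(\<forall>f\<in>S. \<forall>f'\<in>S. walk_between S d f f') \<and> unique_paths S d"
  show "\<forall>f\<in>S. \<forall>f'\<in>S. \<exists>!fs. path_in S d fs \<and> hd fs = f \<and> last fs = f'"
  proof (intro ballI)
    fix f f' assume "f \<in> S" "f' \<in> S"
    then obtain ws where ws: "walk_in S d ws" "hd ws = f" "last ws = f'"
      using connected unfolding walk_between_def by blast
    have "\<exists>fs. path_in S d fs \<and> hd fs = f \<and> last fs = f'"
      using walk_to_path[OF assms ws(1)] ws(2,3) by simp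
    then show "\<exists>!fs. path_in S d fs \<and> hd fs = f \<and> last fs = f'"
      using connected unfolding unique_paths_def by (auto intro: ex_ex1I)
  qed
qed

lemma path_in_restrict: "path_in T d fs \<Longrightarrow> set fs \<subseteq> S \<Longrightarrow> path_in S d fs"
  unfolding path_in_def walk_in_def by auto

lemma unique_paths_entering_ridge:
  assumes unique: "unique_paths S d" and card_S: "\<forall>G\<in>S. card G = Suc d"
    and paths: "path_in S d B" "path_in S d C" "last B = last C"
    and ridge: "r \<subseteq> hd B" "r \<subseteq> hd C" "card r = d" "r \<notin> set (ridges B)" "r \<notin> set (ridges C)"
  shows "B = C"
proof (rule ccontr)
  assume "B \<noteq> C"
  with unique paths have "hd C \<noteq> hd B" unfolding unique_paths_def by blast
  have ne: "B \<noteq> []" "C \<noteq> []" using paths unfolding path_in_def walk_in_def by auto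
  then have "hd B \<in> S" "hd C \<in> S" using paths unfolding path_in_def walk_in_def by auto
  then have meet: "hd C \<inter> hd B = r"
    using meet_eq_common_subset card_S ridge \<open>hd C \<noteq> hd B\<close> by blast
  then have "path_in S d (hd C # B)"
    using paths ridge \<open>hd C \<in> S\<close> ne by (simp add: path_in_Cons)
  then have "hd C # B = C" using unique paths ne unfolding unique_paths_def by simp
  then have "ridges C = r # ridges B" using meet ne by (metis ridges_Cons)
  then show False using ridge by simp
qed

section \<open>Attaching a facet with a free vertex\<close>

lemma meet_with_free_vertex:
  assumes "card F = Suc d" "v \<in> F" "v \<notin> a" "card (F \<inter> a) = d"
  shows "F \<inter> a = F - {v}"
proof -
  have "finite F" using assms(1) card.infinite by fastforce
  moreover have "F \<inter> a \<subseteq> F - {v}" using assms(3) by blast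
  moreover have "card (F - {v}) = d" using assms(1,2) by simp
  ultimately show ?thesis using card_subset_eq[of "F - {v}" "F \<inter> a"] assms(4) by simp
qed

locale free_extension =
  fixes S :: "'a set set" and F :: "'a set" and v :: 'a and d :: nat
  assumes card_facets: "\<forall>G\<in>insert F S. card G = Suc d"
    and free_vertex: "v \<in> F" "v \<notin> \<Union>S"
begin

lemma free_facet_notin: "F \<notin> S"
  using free_vertex by blast

lemma adjacent_to_free_facet:
  assumes "a \<in> insert F S" "card (F \<inter> a) = d"
  shows "a \<in> S" "F \<inter> a = F - {v}"
proof -
  have "card F = Suc d" using card_facets by simp
  then have "a \<noteq> F" using assms(2) by auto
  then show "a \<in> S" using assms(1) by simp
  then have "v \<notin> a" using free_vertex by blast
  then show "F \<inter> a = F - {v}"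
    using meet_with_free_vertex[of F d v a] card_facets free_vertex(1) assms(2) by simp
qed

lemma free_facet_not_interior:
  assumes "path_in (insert F S) d (A @ F # B)"
  shows "A = [] \<or> B = []"
proof (rule ccontr)
  assume "\<not> (A = [] \<or> B = [])"
  then have ne: "A \<noteq> []" "B \<noteq> []" by auto
  have "walk_in (insert F S) d ((A @ [F]) @ B)" using assms unfolding path_in_def by simp
  then have "walk_in (insert F S) d (A @ [F])" "walk_in (insert F S) d B" "card (F \<inter> hd B) = d"
    using ne walk_in_append[of "A @ [F]" B] by simp_all
  then have "walk_in (insert F S) d A" "card (F \<inter> last A) = d" "card (F \<inter> hd B) = d"
    using ne walk_in_append[of A "[F]"] by (simp_all add: Int_commute)
  moreover have "last A \<in> insert F S" "hd B \<in> insert F S"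
    using walk_in_ends \<open>walk_in (insert F S) d A\<close> \<open>walk_in (insert F S) d B\<close> by blast+
  ultimately have "F \<inter> last A = F - {v}" "F \<inter> hd B = F - {v}"
    using adjacent_to_free_facet(2) by blast+
  moreover have "ridges (A @ F # B) = ridges A @ [F \<inter> last A, F \<inter> hd B] @ ridges B"
    using ne by (simp add: ridges_append ridges_Cons Int_commute)
  ultimately show False using assms unfolding path_in_def by simp
qed

lemma free_facet_once:
  assumes path: "path_in (insert F S) d (A @ F # B)"
  shows "F \<notin> set B"
proof
  assume "F \<in> set B"
  then obtain B1 B2 where B: "B = B1 @ F # B2" by (meson split_list)
  have "B2 = []" using free_facet_not_interior[of "A @ F # B1" B2] path B by simp
  moreover have "A = []" using free_facet_not_interior[of A "B1 @ [F]"] path B \<open>B2 = []\<close> by simp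
  ultimately have path': "path_in (insert F S) d (F # B1 @ [F])" using path B by simp
  show False
  proof (cases "B1 = []")
    case True
    then show False using path' card_facets unfolding path_in_def walk_in_def by simp
  next
    case False
    have "card (F \<inter> hd B1) = d" "path_in (insert F S) d (B1 @ [F])"
      using path' False by (simp_all add: path_in_Cons)
    then have "card (F \<inter> hd B1) = d" "card (F \<inter> last B1) = d" "walk_in (insert F S) d B1"
      using False walk_in_append[of B1 "[F]"] unfolding path_in_def by (simp_all add: Int_commute)
    moreover have "hd B1 \<in> insert F S" "last B1 \<in> insert F S"
      using walk_in_ends \<open>walk_in (insert F S) d B1\<close> by blast+
    ultimately have "F \<inter> hd B1 = F - {v}" "F \<inter> last B1 = F - {v}"
      using adjacent_to_free_facet(2) by blast+
    moreover have "ridges (F # B1 @ [F]) = (F \<inter> hd B1) # ridges B1 @ [F \<inter> last B1]"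
      using False by (simp add: ridges_append ridges_Cons Int_commute)
    ultimately show False using path' unfolding path_in_def by simp
  qed
qed

lemma path_through_free_facet:
  assumes path: "path_in (insert F S) d fs" and "F \<in> set fs"
  shows "fs = [F] \<or> (\<exists>B. fs = F # B \<and> B \<noteq> [] \<and> set B \<subseteq> S) \<or>
         (\<exists>A. fs = A @ [F] \<and> A \<noteq> [] \<and> set A \<subseteq> S)"
proof -
  obtain A B where fs: "fs = A @ F # B" using \<open>F \<in> set fs\<close> by (meson split_list)
  have "path_in (insert F S) d (rev B @ F # rev A)"
    using path fs path_in_rev[of "insert F S" d fs] by simp
  from free_facet_once[OF this] have "F \<notin> set A" by simp
  moreover have "F \<notin> set B" using free_facet_once path fs by blast
  moreover have "set fs \<subseteq> insert F S" using path unfolding path_in_def walk_in_def by simp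
  ultimately have "set A \<subseteq> S" "set B \<subseteq> S" using fs by auto
  moreover have "A = [] \<or> B = []" using free_facet_not_interior path fs by blast
  ultimately show ?thesis using fs by (cases "A = []"; cases "B = []") auto
qed

lemma path_from_free_facet:
  assumes path: "path_in (insert F S) d fs" and "hd fs = F"
  shows "fs = [F] \<or>
    (\<exists>B. fs = F # B \<and> path_in S d B \<and> F - {v} \<subseteq> hd B \<and> F - {v} \<notin> set (ridges B))"
proof -
  have "fs \<noteq> []" using path unfolding path_in_def walk_in_def by simp
  then have "F \<in> set fs" using \<open>hd fs = F\<close> by auto
  moreover have "\<nexists>A. fs = A @ [F] \<and> A \<noteq> [] \<and> set A \<subseteq> S"
  proof
    assume "\<exists>A. fs = A @ [F] \<and> A \<noteq> [] \<and> set A \<subseteq> S"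
    then obtain A where "fs = A @ [F]" "A \<noteq> []" "set A \<subseteq> S" by blast
    then have "hd fs \<in> S" using hd_in_set by fastforce
    then show False using \<open>hd fs = F\<close> free_facet_notin by simp
  qed
  ultimately consider "fs = [F]" | B where "fs = F # B" "B \<noteq> []" "set B \<subseteq> S"
    using path_through_free_facet[OF path] by blast
  then show ?thesis
  proof cases
    case 2
    then have adj: "card (F \<inter> hd B) = d" and fresh: "F \<inter> hd B \<notin> set (ridges B)"
      and "path_in (insert F S) d B"
      using path by (simp_all add: path_in_Cons)
    then have "path_in S d B" using path_in_restrict 2(3) by blast
    moreover have "hd B \<in> insert F S" using 2 hd_in_set[of B] by blast
    then have "F \<inter> hd B = F - {v}" using adjacent_to_free_facet(2) adj by blast
    ultimately show ?thesis using 2 fresh by auto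
  qed simp
qed

lemma unique_paths_from_free_facet:
  assumes unique: "unique_paths S d"
    and paths: "path_in (insert F S) d fs" "path_in (insert F S) d gs"
    and ends: "hd fs = F" "hd gs = F" "last fs = last gs"
  shows "fs = gs"
proof -
  have card_S: "\<forall>G\<in>S. card G = Suc d" using card_facets by simp
  have card_ridge: "card (F - {v}) = d" using card_facets free_vertex by simp
  have last_in_S: "B \<noteq> [] \<and> last B \<in> S" if "path_in S d B" for B
    using that unfolding path_in_def walk_in_def by auto
  show ?thesis
  proof (cases "fs = [F]")
    case True
    then have "last gs \<notin> S" using ends(3) free_facet_notin by simp
    then have "gs = [F]" using path_from_free_facet[OF paths(2) ends(2)] last_in_S by force
    then show ?thesis using True by simp
  next
    case False
    then obtain B where B: "fs = F # B" "path_in S d B" "F - {v} \<subseteq> hd B" "F - {v} \<notin> set (ridges B)"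
      using path_from_free_facet[OF paths(1) ends(1)] by blast
    then have "last gs \<in> S" using ends(3) last_in_S[OF B(2)] by auto
    then have "gs \<noteq> [F]" using free_facet_notin by auto
    then obtain C where C: "gs = F # C" "path_in S d C" "F - {v} \<subseteq> hd C" "F - {v} \<notin> set (ridges C)"
      using path_from_free_facet[OF paths(2) ends(2)] by blast
    have "last B = last C" using B(1) C(1) ends(3) last_in_S[OF B(2)] last_in_S[OF C(2)] by auto
    then have "B = C"
      by (rule unique_paths_entering_ridge[OF unique card_S B(2) C(2) _ B(3) C(3) card_ridge B(4) C(4)])
    then show ?thesis using B C by simp
  qed
qed

lemma free_facet_at_end:
  assumes "path_in (insert F S) d fs" "F \<in> set fs"
  shows "hd fs = F \<or> last fs = F"
  using path_through_free_facet[OF assms] by auto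

lemma unique_paths_insert:
  assumes unique: "unique_paths S d"
  shows "unique_paths (insert F S) d"
  unfolding unique_paths_def
proof (intro allI impI)
  fix fs gs
  assume fs: "path_in (insert F S) d fs" and gs: "path_in (insert F S) d gs"
    and ends: "hd fs = hd gs" "last fs = last gs"
  have ne: "fs \<noteq> []" "gs \<noteq> []" using fs gs unfolding path_in_def walk_in_def by auto
  consider "hd fs = F" | "last fs = F" | "hd fs \<noteq> F" "last fs \<noteq> F" by blast
  then show "fs = gs"
  proof cases
    case 1
    then show ?thesis using unique_paths_from_free_facet[OF unique fs gs] ends by simp
  next
    case 2
    have "rev fs = rev gs"
      using unique_paths_from_free_facet[OF unique, of "rev fs" "rev gs"] fs gs ends ne 2
      by (simp add: hd_rev last_rev)
    then show ?thesis by simp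
  next
    case 3
    have "F \<notin> set fs" using free_facet_at_end[OF fs] 3 by blast
    moreover have "F \<notin> set gs" using free_facet_at_end[OF gs] 3 ends by auto
    moreover have "set fs \<subseteq> insert F S" "set gs \<subseteq> insert F S"
      using fs gs unfolding path_in_def walk_in_def by auto
    ultimately have "set fs \<subseteq> S" "set gs \<subseteq> S" by auto
    then have "path_in S d fs" "path_in S d gs"
      using path_in_restrict fs gs by blast+
    then show ?thesis using unique ends unfolding unique_paths_def by blast
  qed
qed

end

section \<open>Stacking orders and adjacency orders\<close>

inductive stacking :: "'a set list \<Rightarrow> bool" where
  single: "stacking [F]"
| snoc: "stacking Fs \<Longrightarrow> F - \<Union>(set Fs) = {v} \<Longrightarrow> G \<in> set Fs \<Longrightarrow> F - {v} \<subseteq> G \<Longrightarrow>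
    stacking (Fs @ [F])"

lemma stacking_snoc_iff:
  "stacking (Fs @ [F]) \<longleftrightarrow>
     Fs = [] \<or> stacking Fs \<and> (\<exists>v. F - \<Union>(set Fs) = {v} \<and> (\<exists>G\<in>set Fs. F - {v} \<subseteq> G))"
proof
  assume "stacking (Fs @ [F])"
  then show "Fs = [] \<or> stacking Fs \<and> (\<exists>v. F - \<Union>(set Fs) = {v} \<and> (\<exists>G\<in>set Fs. F - {v} \<subseteq> G))"
    by cases auto
qed (auto intro: stacking.intros)

lemma stacking_conv_nth:
  "stacking Fs \<longleftrightarrow> Fs \<noteq> [] \<and> (\<forall>p. 0 < p \<and> p < length Fs \<longrightarrow>
     (\<exists>v. Fs ! p - \<Union>(set (take p Fs)) = {v} \<and> (\<exists>j<p. Fs ! p - {v} \<subseteq> Fs ! j)))"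
proof (induction Fs rule: rev_induct)
  case Nil
  then show ?case by (auto elim: stacking.cases)
next
  case (snoc F Fs)
  define free :: "'a set list \<Rightarrow> nat \<Rightarrow> bool" where "free Fs p \<longleftrightarrow>
    (\<exists>v. Fs ! p - \<Union>(set (take p Fs)) = {v} \<and> (\<exists>j<p. Fs ! p - {v} \<subseteq> Fs ! j))" for Fs p
  have earlier: "free (Fs @ [F]) p \<longleftrightarrow> free Fs p" if "p < length Fs" for p
    using that unfolding free_def by (simp add: nth_append_left) (smt (verit) nth_append order_less_trans)
  have last: "free (Fs @ [F]) (length Fs) \<longleftrightarrow>
      (\<exists>v. F - \<Union>(set Fs) = {v} \<and> (\<exists>G\<in>set Fs. F - {v} \<subseteq> G))"
  proof -
    have "(\<exists>j<length Fs. X \<subseteq> (Fs @ [F]) ! j) \<longleftrightarrow> (\<exists>G\<in>set Fs. X \<subseteq> G)" for X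
      by (metis in_set_conv_nth nth_append_left)
    then show ?thesis unfolding free_def by simp
  qed
  have "(\<forall>p. 0 < p \<and> p < length (Fs @ [F]) \<longrightarrow> free (Fs @ [F]) p) \<longleftrightarrow>
      (\<forall>p. 0 < p \<and> p < length Fs \<longrightarrow> free Fs p) \<and> (Fs \<noteq> [] \<longrightarrow> free (Fs @ [F]) (length Fs))"
    using earlier by (auto simp: less_Suc_eq)
  then show ?case using snoc.IH last stacking_snoc_iff unfolding free_def by auto
qed

lemma stacking_order_iff:
  "stacking_order X Fs \<longleftrightarrow> distinct Fs \<and> set Fs = facets X \<and> stacking Fs"
  unfolding stacking_order_def stacking_conv_nth by auto

inductive adjacency_order :: "nat \<Rightarrow> 'a set list \<Rightarrow> bool" for d where
  single: "adjacency_order d [F]"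
| snoc: "adjacency_order d Fs \<Longrightarrow> G \<in> set Fs \<Longrightarrow> card (F \<inter> G) = d \<Longrightarrow>
    adjacency_order d (Fs @ [F])"

lemma finite_Union_of_card_Suc: "\<forall>G\<in>S. card G = Suc d \<Longrightarrow> finite S \<Longrightarrow> finite (\<Union>S)"
  by (metis card.infinite finite_Union nat.distinct(1))

lemma stacking_imp_adjacency_order:
  assumes "stacking Fs" "\<forall>G\<in>set Fs. card G = Suc d"
  shows "adjacency_order d Fs"
  using assms
proof (induction rule: stacking.induct)
  case (snoc Fs F v G)
  have "v \<in> F" "v \<notin> G" using snoc.hyps(2,3) by blast+
  then have "F \<inter> G = F - {v}" using snoc.hyps(4) by blast
  moreover have "card F = Suc d" "\<forall>G\<in>set Fs. card G = Suc d" using snoc.prems by simp_all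
  ultimately have "card (F \<inter> G) = d" using \<open>v \<in> F\<close> by simp
  with snoc.IH[OF \<open>\<forall>G\<in>set Fs. card G = Suc d\<close>] snoc.hyps(3) show ?case
    by (rule adjacency_order.snoc)
qed (rule adjacency_order.single)

lemma adjacency_order_walk_between:
  assumes "adjacency_order d Fs" "f \<in> set Fs" "f' \<in> set Fs"
  shows "walk_between (set Fs) d f f'"
  using assms
proof (induction arbitrary: f f' rule: adjacency_order.induct)
  case (single F)
  then show ?case using walk_between_refl[of F "{F}" d] by simp
next
  case (snoc Fs G F)
  let ?S = "set (Fs @ [F])"
  have to_F: "walk_between ?S d g F" if "g \<in> ?S" for g
  proof (cases "g = F")
    case False
    then have "g \<in> set Fs" using that by simp
    then have "walk_between (set Fs) d g G" using snoc.IH snoc.hyps(2) by blast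
    then have "walk_between ?S d g G" by (rule walk_between_mono) auto
    moreover have "walk_between ?S d G F"
      using snoc.hyps(2,3) walk_between_adjacent[of G ?S F d] by (simp add: Int_commute)
    ultimately show ?thesis by (rule walk_between_trans)
  qed (simp add: walk_between_refl)
  show ?case using to_F[OF snoc.prems(1)] walk_between_sym[OF to_F[OF snoc.prems(2)]]
    by (rule walk_between_trans)
qed

lemma card_Union_snoc:
  assumes "\<forall>G\<in>set (Fs @ [F]). card G = Suc d"
  shows "card (\<Union>(set (Fs @ [F]))) = card (\<Union>(set Fs)) + card (F - \<Union>(set Fs))"
proof -
  have "finite (\<Union>(set (Fs @ [F])))" using assms finite_Union_of_card_Suc by blast
  then have "finite (\<Union>(set Fs))" "finite (F - \<Union>(set Fs))" by auto
  moreover have "\<Union>(set (Fs @ [F])) = \<Union>(set Fs) \<union> (F - \<Union>(set Fs))" by auto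
  ultimately show ?thesis using card_Un_disjoint[of "\<Union>(set Fs)" "F - \<Union>(set Fs)"] by simp
qed

lemma card_new_vertices_le_1:
  assumes "card F = Suc d" "G \<subseteq> U" "card (F \<inter> G) = d"
  shows "card (F - U) \<le> 1"
proof -
  have "finite F" using assms(1) card.infinite by fastforce
  then have "card (F - G) = 1" using assms(1,3) by (simp add: card_Diff_subset_Int)
  moreover have "F - U \<subseteq> F - G" using assms(2) by blast
  ultimately show ?thesis using \<open>finite F\<close> by (metis card_mono finite_Diff)
qed

lemma card_Union_stacking:
  assumes "stacking Fs" "\<forall>G\<in>set Fs. card G = Suc d"
  shows "card (\<Union>(set Fs)) = length Fs + d"
  using assms
proof (induction rule: stacking.induct)
  case (snoc Fs F v G)
  then show ?case using card_Union_snoc[OF snoc.prems] by simp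
qed simp

lemma card_Union_adjacency_order_le:
  assumes "adjacency_order d Fs" "\<forall>G\<in>set Fs. card G = Suc d"
  shows "card (\<Union>(set Fs)) \<le> length Fs + d"
  using assms
proof (induction rule: adjacency_order.induct)
  case (snoc Fs G F)
  have "card F = Suc d" "G \<subseteq> \<Union>(set Fs)" using snoc.prems snoc.hyps(2) by auto
  then have "card (F - \<Union>(set Fs)) \<le> 1" using card_new_vertices_le_1 snoc.hyps(3) by blast
  then show ?case using card_Union_snoc[OF snoc.prems] snoc.IH snoc.prems by simp
qed simp

text \<open>Each step of an adjacency order adds at most one vertex, so reaching the maximal count forces
  exactly one new vertex per step; the rest of the new facet is then its ridge with the earlier facet.\<close>
lemma stacking_of_adjacency_order:
  assumes "adjacency_order d Fs" "\<forall>G\<in>set Fs. card G = Suc d"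
    and "length Fs + d \<le> card (\<Union>(set Fs))"
  shows "stacking Fs"
  using assms
proof (induction rule: adjacency_order.induct)
  case (single F)
  show ?case by (rule stacking.single)
next
  case (snoc Fs G F)
  have card_F: "card F = Suc d" and card_Fs: "\<forall>G\<in>set Fs. card G = Suc d"
    using snoc.prems(1) by simp_all
  have "G \<subseteq> \<Union>(set Fs)" using snoc.hyps(2) by blast
  then have "card (F - \<Union>(set Fs)) \<le> 1" using card_new_vertices_le_1 card_F snoc.hyps(3) by blast
  moreover have "card (\<Union>(set Fs)) \<le> length Fs + d"
    using card_Union_adjacency_order_le[OF snoc.hyps(1) card_Fs] .
  ultimately have "length Fs + d \<le> card (\<Union>(set Fs))" "card (F - \<Union>(set Fs)) = 1"
    using card_Union_snoc[OF snoc.prems(1)] snoc.prems(2) by simp_all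
  then have "stacking Fs" using snoc.IH card_Fs by blast
  obtain v where v: "F - \<Union>(set Fs) = {v}"
    using \<open>card (F - \<Union>(set Fs)) = 1\<close> by (rule card_1_singletonE)
  have "F \<inter> G \<subseteq> F - {v}" using v snoc.hyps(2) by blast
  moreover have "finite F" using card_F card.infinite by fastforce
  moreover have "v \<in> F" using v by blast
  then have "card (F - {v}) = d" using card_F by simp
  ultimately have "F \<inter> G = F - {v}" using snoc.hyps(3) card_subset_eq[of "F - {v}" "F \<inter> G"] by simp
  then have "F - {v} \<subseteq> G" by blast
  with \<open>stacking Fs\<close> v snoc.hyps(2) show ?case by (rule stacking.snoc)
qed

lemma adjacency_order_extend:
  assumes order: "adjacency_order d Fs" and "set Fs \<subseteq> S" "g \<in> S - set Fs"
    and "walk_between S d (hd Fs) g"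
  shows "\<exists>F\<in>S - set Fs. adjacency_order d (Fs @ [F])"
proof -
  obtain ws where ws: "walk_in S d ws" "hd ws = hd Fs" "last ws = g"
    using assms(4) unfolding walk_between_def by blast
  have "Fs \<noteq> []" using order by cases auto
  have "ws \<noteq> []" using ws unfolding walk_in_def by simp
  then have "\<exists>x\<in>set ws. x \<notin> set Fs" using ws(3) assms(3) last_in_set by blast
  then obtain ys x zs where split: "ws = ys @ x # zs" "x \<notin> set Fs" "\<forall>y\<in>set ys. y \<in> set Fs"
    using split_list_first_prop[of ws "\<lambda>x. x \<notin> set Fs"] by blast
  have "ys \<noteq> []"
  proof
    assume "ys = []"
    then have "x = hd Fs" using split(1) ws(2) by simp
    then show False using split(2) \<open>Fs \<noteq> []\<close> by simp
  qed
  then have "walk_in S d ys" "walk_in S d (x # zs)" "card (last ys \<inter> x) = d"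
    using ws(1) split(1) walk_in_append[of ys "x # zs"] by simp_all
  then have "x \<in> S" "last ys \<in> set Fs" "card (x \<inter> last ys) = d"
    using split(3) \<open>ys \<noteq> []\<close> unfolding walk_in_def by (auto simp: Int_commute)
  then show ?thesis using split(2) adjacency_order.snoc[OF order] by blast
qed

lemma adjacency_enumeration_exists:
  assumes "finite S" "S \<noteq> {}" and connected: "\<forall>f\<in>S. \<forall>f'\<in>S. walk_between S d f f'"
  shows "\<exists>Fs. adjacency_order d Fs \<and> distinct Fs \<and> set Fs = S"
proof -
  have "\<exists>Fs. adjacency_order d Fs \<and> distinct Fs \<and> set Fs \<subseteq> S \<and> length Fs = Suc k"
    if "Suc k \<le> card S" for k
    using that
  proof (induction k)
    case 0
    obtain F where "F \<in> S" using assms(2) by blast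
    then show ?case using adjacency_order.single[of d F] by (intro exI[of _ "[F]"]) simp
  next
    case (Suc k)
    then obtain Fs where Fs: "adjacency_order d Fs" "distinct Fs" "set Fs \<subseteq> S" "length Fs = Suc k"
      by (meson Suc_leD)
    then have "card (set Fs) < card S" using Suc.prems by (simp add: distinct_card)
    then have "set Fs \<noteq> S" by auto
    then obtain g where "g \<in> S - set Fs" using Fs(3) by blast
    moreover have "Fs \<noteq> []" using Fs(4) by auto
    then have "hd Fs \<in> S" using Fs(3) hd_in_set by blast
    ultimately obtain F where "F \<in> S - set Fs" "adjacency_order d (Fs @ [F])"
      using adjacency_order_extend[OF Fs(1,3)] connected by blast
    then show ?case using Fs by (intro exI[of _ "Fs @ [F]"]) simp
  qed
  moreover have "0 < card S" using assms(1,2) card_gt_0_iff by blast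
  then have "Suc (card S - 1) = card S" by simp
  ultimately obtain Fs where Fs: "adjacency_order d Fs" "distinct Fs" "set Fs \<subseteq> S"
    and "length Fs = card S"
    by (metis order.refl)
  then have "card (set Fs) = card S" by (simp add: distinct_card)
  then have "set Fs = S" using card_subset_eq[OF assms(1) Fs(3)] by simp
  then show ?thesis using Fs by blast
qed

lemma unique_paths_stacking:
  assumes "stacking Fs" "\<forall>G\<in>set Fs. card G = Suc d"
  shows "unique_paths (set Fs) d"
  using assms
proof (induction rule: stacking.induct)
  case (single F)
  have "card F = Suc d" using single by simp
  then obtain v where "v \<in> F" by (metis card.empty ex_in_conv nat.distinct(1))
  then interpret free_extension "{}" F v d using \<open>card F = Suc d\<close> by unfold_locales auto
  have "unique_paths {} d" unfolding unique_paths_def path_in_def walk_in_def by auto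
  then show ?case using unique_paths_insert by simp
next
  case (snoc Fs F v G)
  have card_Fs: "\<forall>G\<in>set Fs. card G = Suc d" using snoc.prems by simp
  interpret free_extension "set Fs" F v d
    using snoc.prems snoc.hyps(2) by unfold_locales auto
  show ?case using unique_paths_insert[OF snoc.IH[OF card_Fs]] by simp
qed

lemma stacking_enumeration_iff:
  assumes "finite S" "S \<noteq> {}" and card_S: "\<forall>G\<in>S. card G = Suc d"
  shows "(\<exists>Fs. distinct Fs \<and> set Fs = S \<and> stacking Fs) \<longleftrightarrow>
    card (\<Union>S) = card S + d \<and> (\<forall>f\<in>S. \<forall>f'\<in>S. walk_between S d f f') \<and> unique_paths S d"
proof
  assume "\<exists>Fs. distinct Fs \<and> set Fs = S \<and> stacking Fs"
  then obtain Fs where Fs: "distinct Fs" "set Fs = S" "stacking Fs" by blast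
  then have "card S = length Fs" using distinct_card by blast
  have card_Fs: "\<forall>G\<in>set Fs. card G = Suc d" using Fs(2) card_S by simp
  have "card (\<Union>S) = card S + d"
    using card_Union_stacking[OF Fs(3) card_Fs] Fs(2) \<open>card S = length Fs\<close> by simp
  moreover have "\<forall>f\<in>S. \<forall>f'\<in>S. walk_between S d f f'"
    using adjacency_order_walk_between[OF stacking_imp_adjacency_order[OF Fs(3) card_Fs]] Fs(2) by blast
  moreover have "unique_paths S d" using unique_paths_stacking[OF Fs(3) card_Fs] Fs(2) by simp
  ultimately show "card (\<Union>S) = card S + d \<and> (\<forall>f\<in>S. \<forall>f'\<in>S. walk_between S d f f') \<and> unique_paths S d"
    by blast
next
  assume H: "card (\<Union>S) = card S + d \<and> (\<forall>f\<in>S. \<forall>f'\<in>S. walk_between S d f f') \<and> unique_paths S d"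
  then obtain Fs where Fs: "adjacency_order d Fs" "distinct Fs" "set Fs = S"
    using adjacency_enumeration_exists[OF assms(1,2)] by blast
  moreover have "card S = length Fs" using distinct_card[OF Fs(2)] Fs(3) by simp
  ultimately have "card (\<Union>S) = length Fs + d" using H by simp
  then have "stacking Fs" using stacking_of_adjacency_order[OF Fs(1)] card_S Fs(3) by simp
  then show "\<exists>Fs. distinct Fs \<and> set Fs = S \<and> stacking Fs" using Fs by blast
qed

section \<open>Facets of a simplicial complex\<close>

lemma simplicial_complexD:
  "simplicial_complex V X \<Longrightarrow> finite V \<and> (\<forall>F\<in>X. F \<subseteq> V) \<and> (\<forall>x\<in>V. \<exists>F\<in>X. x \<in> F)"
  unfolding simplicial_complex_def by (elim conjE, intro conjI, assumption+)

lemma finite_faces: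
  assumes "simplicial_complex V X"
  shows "finite X"
proof -
  have "finite V" "\<forall>F\<in>X. F \<subseteq> V" using simplicial_complexD[OF assms] by simp_all
  then have "finite (Pow V)" "X \<subseteq> Pow V" by auto
  then show ?thesis by (rule finite_subset[rotated])
qed

lemma Union_facets:
  assumes "simplicial_complex V X"
  shows "\<Union>(facets X) = V"
proof
  have faces: "\<forall>F\<in>X. F \<subseteq> V" "\<forall>x\<in>V. \<exists>F\<in>X. x \<in> F" using simplicial_complexD[OF assms] by simp_all
  moreover have "facets X \<subseteq> X" unfolding facets_def by simp
  ultimately show "\<Union>(facets X) \<subseteq> V" by blast
  show "V \<subseteq> \<Union>(facets X)"
  proof
    fix x assume "x \<in> V"
    then obtain F where F: "F \<in> X" "x \<in> F" using faces(2) by blast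
    obtain M where "M \<in> X" "F \<subseteq> M" "\<forall>G\<in>X. M \<subseteq> G \<longrightarrow> M = G"
      using finite_has_maximal2[OF finite_faces[OF assms] F(1)] by metis
    then have "M \<in> facets X" unfolding facets_def by auto
    then show "x \<in> \<Union>(facets X)" using F(2) \<open>F \<subseteq> M\<close> by blast
  qed
qed

lemma finite_facets: "simplicial_complex V X \<Longrightarrow> finite (facets X)"
  using finite_faces finite_subset[of "facets X" X] unfolding facets_def by blast

theorem proposition2p6:
  fixes V :: "'a set" and X :: "'a set set" and d n :: nat
  assumes "simplicial_complex V X"
    and "pure X d"
    and "n = card (facets X)"
    and "n \<ge> 1"
  shows "stacked X \<longleftrightarrow>
           card V = n + d \<and>
           (\<forall>f\<in>facets X. \<forall>f'\<in>facets X. \<exists>!fs. path_from X d fs f f')"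
proof -
  define S where "S = facets X"
  have "finite S" "\<Union>S = V" using finite_facets Union_facets assms(1) unfolding S_def by blast+
  have card_S: "\<forall>G\<in>S. card G = Suc d" using assms(2) unfolding pure_def S_def by simp
  have "card S = n" "S \<noteq> {}" using assms(3,4) unfolding S_def by auto
  have "stacked X \<longleftrightarrow> (\<exists>Fs. distinct Fs \<and> set Fs = S \<and> stacking Fs)"
    using assms(2) unfolding stacked_def stacking_order_iff S_def by blast
  also have "\<dots> \<longleftrightarrow>
      card (\<Union>S) = card S + d \<and> (\<forall>f\<in>S. \<forall>f'\<in>S. walk_between S d f f') \<and> unique_paths S d"
    by (rule stacking_enumeration_iff[OF \<open>finite S\<close> \<open>S \<noteq> {}\<close> card_S])
  also have "\<dots> \<longleftrightarrow>
      card V = n + d \<and> (\<forall>f\<in>S. \<forall>f'\<in>S. \<exists>!fs. path_in S d fs \<and> hd fs = f \<and> last fs = f')"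
    unfolding ex1_path_iff[OF card_S] \<open>\<Union>S = V\<close> \<open>card S = n\<close> ..
  also have "\<dots> \<longleftrightarrow> card V = n + d \<and> (\<forall>f\<in>facets X. \<forall>f'\<in>facets X. \<exists>!fs. path_from X d fs f f')"
    unfolding path_from_def path_iff_path_in S_def ..
  finally show ?thesis .
qed

end
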